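(* Let $n\ge1$ and let $\mathbb X$, $\mathbb Y$ be disjoint sets of variables with $|\mathbb X|=|\mathbb Y|=k>n$. Then the homotopy category of finitely generated graded matrix factorizations $\mathrm{HMF}(\mathrm{Sym}(\mathbb X|\mathbb Y),\Sigma\mathbb X^{n+1}-\Sigma\mathbb Y^{n+1})$ is trivial (every object is isomorphic to $0$).
   Context: $\mathrm{Sym}(\mathbb X|\mathbb Y)$ is the ring of complex polynomials in $\mathbb X\cup\mathbb Y$ symmetric in $\mathbb X$ and in $\mathbb Y$ separately, i.e. the polynomial ring in the elementary symmetric polynomials $X_1,\dots,X_k,Y_1,\dots,Y_k$, graded with variables of positive degree; $\Sigma\mathbb X^{n+1}=\sum_{x\in\mathbb X}x^{n+1}$. For a regular local graded ring $S$ and homogeneous $w$ of degree $d>0$ in the homogeneous maximal ideal, a graded matrix factorization of type $(S,w)$ is $M^0\xrightarrow fM^{-1}\xrightarrow gM^0$ with $M^0,M^{-1}$ finitely generated free graded modules, $f$ of degree $d$, $g$ of degree $0$, $gf=fg=w$; $\mathrm{HMF}(S,w)$ is the category of these modulo homotopy (null-homotopies $D^0:M^0\to N^{-1}$ of degree $0$, $D^{-1}:M^{-1}\to N^0$ of degree $-d$ with $g'D^0+D^{-1}f=\alpha$, $f'D^{-1}+D^0g=\beta$). *)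

theory Defs
  imports Complex_Main "HOL-Library.Poly_Mapping"
begin

text \<open>Multiplication is convolution.\<close>
type_synonym mpoly = "(nat \<Rightarrow>\<^sub>0 nat) \<Rightarrow>\<^sub>0 complex"

definition Var :: "nat \<Rightarrow> mpoly" where
  "Var i = Poly_Mapping.single (Poly_Mapping.single i 1) 1"

definition const :: "complex \<Rightarrow> mpoly" where
  "const a = Poly_Mapping.single 0 a"

definition mdeg :: "(nat \<Rightarrow> nat) \<Rightarrow> (nat \<Rightarrow>\<^sub>0 nat) \<Rightarrow> int" where
  "mdeg wt m = int (\<Sum>v\<in>Poly_Mapping.keys m. Poly_Mapping.lookup m v * wt v)"

text \<open>Homogeneous of degree e (0 is homogeneous of every degree).\<close>
definition homog :: "(nat \<Rightarrow> nat) \<Rightarrow> int \<Rightarrow> mpoly \<Rightarrow> bool" where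
  "homog wt e p \<longleftrightarrow> (\<forall>m\<in>Poly_Mapping.keys p. mdeg wt m = e)"

definition in_ring :: "nat set \<Rightarrow> mpoly \<Rightarrow> bool" where
  "in_ring V p \<longleftrightarrow> (\<forall>m\<in>Poly_Mapping.keys p. Poly_Mapping.keys m \<subseteq> V)"

definition subst :: "(nat \<Rightarrow> mpoly) \<Rightarrow> mpoly \<Rightarrow> mpoly" where
  "subst \<sigma> p = (\<Sum>m\<in>Poly_Mapping.keys p. const (Poly_Mapping.lookup p m) * (\<Prod>v\<in>Poly_Mapping.keys m. \<sigma> v ^ Poly_Mapping.lookup m v))"

definition elem_sym :: "nat set \<Rightarrow> nat \<Rightarrow> mpoly" where
  "elem_sym A i = (\<Sum>T\<in>{T. T \<subseteq> A \<and> card T = i}. \<Prod>j\<in>T. Var j)"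

definition power_sum :: "nat set \<Rightarrow> nat \<Rightarrow> mpoly" where
  "power_sum A m = (\<Sum>j\<in>A. Var j ^ m)"

type_synonym mat = "nat \<Rightarrow> nat \<Rightarrow> mpoly"

definition mmul :: "nat \<Rightarrow> mat \<Rightarrow> mat \<Rightarrow> mat" where
  "mmul r A B = (\<lambda>i j. \<Sum>l<r. A i l * B l j)"

definition madd :: "mat \<Rightarrow> mat \<Rightarrow> mat" where
  "madd A B = (\<lambda>i j. A i j + B i j)"

definition msub :: "mat \<Rightarrow> mat \<Rightarrow> mat" where
  "msub A B = (\<lambda>i j. A i j - B i j)"

definition mscal :: "mpoly \<Rightarrow> mat" where
  "mscal w = (\<lambda>i j. if i = j then w else 0)"

definition mid :: mat where "mid = mscal 1"

definition meq :: "nat \<Rightarrow> nat \<Rightarrow> mat \<Rightarrow> mat \<Rightarrow> bool" where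
  "meq rows cols A B \<longleftrightarrow> (\<forall>i<rows. \<forall>j<cols. A i j = B i j)"

text \<open>A finitely generated free graded module S(-a_0) + ... + S(-a_(r-1)) is given by its
  rank r and the degrees a of its basis elements.  A homogeneous S-linear map of degree e
  from (rs, ds) to (rt, dt) is a rt x rs matrix A over S whose entry A i j is homogeneous
  of degree ds j + e - dt i.\<close>
definition hmap :: "nat set \<Rightarrow> (nat \<Rightarrow> nat) \<Rightarrow> nat \<Rightarrow> (nat \<Rightarrow> int) \<Rightarrow> nat \<Rightarrow> (nat \<Rightarrow> int)
    \<Rightarrow> int \<Rightarrow> mat \<Rightarrow> bool" where
  "hmap V wt rs ds rt dt e A \<longleftrightarrow>
     (\<forall>i<rt. \<forall>j<rs. in_ring V (A i j) \<and> homog wt (ds j + e - dt i) (A i j))"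

record mf =
  rk0 :: nat
  dg0 :: "nat \<Rightarrow> int"
  rk1 :: nat
  dg1 :: "nat \<Rightarrow> int"
  mf_f :: mat
  mf_g :: mat

text \<open>Graded matrix factorization M^0 --f--> M^{-1} --g--> M^0 of type (S, w),
  f of degree d, g of degree 0, gf = w, fg = w.\<close>
definition is_mf :: "nat set \<Rightarrow> (nat \<Rightarrow> nat) \<Rightarrow> int \<Rightarrow> mpoly \<Rightarrow> mf \<Rightarrow> bool" where
  "is_mf V wt d w M \<longleftrightarrow>
     hmap V wt (rk0 M) (dg0 M) (rk1 M) (dg1 M) d (mf_f M) \<and>
     hmap V wt (rk1 M) (dg1 M) (rk0 M) (dg0 M) 0 (mf_g M) \<and>
     meq (rk0 M) (rk0 M) (mmul (rk1 M) (mf_g M) (mf_f M)) (mscal w) \<and>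
     meq (rk1 M) (rk1 M) (mmul (rk0 M) (mf_f M) (mf_g M)) (mscal w)"

text \<open>Morphism (alpha, beta): M -> N, alpha: M^0 -> N^0, beta: M^{-1} -> N^{-1}, degree 0,
  commuting with f and g.\<close>
definition mf_mor :: "nat set \<Rightarrow> (nat \<Rightarrow> nat) \<Rightarrow> mf \<Rightarrow> mf \<Rightarrow> mat \<times> mat \<Rightarrow> bool" where
  "mf_mor V wt M N \<phi> \<longleftrightarrow>
     hmap V wt (rk0 M) (dg0 M) (rk0 N) (dg0 N) 0 (fst \<phi>) \<and>
     hmap V wt (rk1 M) (dg1 M) (rk1 N) (dg1 N) 0 (snd \<phi>) \<and>
     meq (rk1 N) (rk0 M) (mmul (rk0 N) (mf_f N) (fst \<phi>)) (mmul (rk1 M) (snd \<phi>) (mf_f M)) \<and>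
     meq (rk0 N) (rk1 M) (mmul (rk1 N) (mf_g N) (snd \<phi>)) (mmul (rk0 M) (fst \<phi>) (mf_g M))"

text \<open>Null-homotopy: D0: M^0 -> N^{-1} of degree 0, D1: M^{-1} -> N^0 of degree -d with
  g' D0 + D1 f = alpha and f' D1 + D0 g = beta.\<close>
definition null_htpc :: "nat set \<Rightarrow> (nat \<Rightarrow> nat) \<Rightarrow> int \<Rightarrow> mf \<Rightarrow> mf \<Rightarrow> mat \<times> mat \<Rightarrow> bool" where
  "null_htpc V wt d M N \<phi> \<longleftrightarrow>
     (\<exists>D0 D1. hmap V wt (rk0 M) (dg0 M) (rk1 N) (dg1 N) 0 D0 \<and>
              hmap V wt (rk1 M) (dg1 M) (rk0 N) (dg0 N) (- d) D1 \<and>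
              meq (rk0 N) (rk0 M) (madd (mmul (rk1 N) (mf_g N) D0) (mmul (rk1 M) D1 (mf_f M))) (fst \<phi>) \<and>
              meq (rk1 N) (rk1 M) (madd (mmul (rk0 N) (mf_f N) D1) (mmul (rk0 M) D0 (mf_g M))) (snd \<phi>))"

definition htpc :: "nat set \<Rightarrow> (nat \<Rightarrow> nat) \<Rightarrow> int \<Rightarrow> mf \<Rightarrow> mf \<Rightarrow> mat \<times> mat \<Rightarrow> mat \<times> mat \<Rightarrow> bool" where
  "htpc V wt d M N \<phi> \<psi> \<longleftrightarrow> null_htpc V wt d M N (msub (fst \<phi>) (fst \<psi>), msub (snd \<phi>) (snd \<psi>))"

definition mf_comp :: "mf \<Rightarrow> mat \<times> mat \<Rightarrow> mat \<times> mat \<Rightarrow> mat \<times> mat" where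
  "mf_comp N \<psi> \<phi> = (mmul (rk0 N) (fst \<psi>) (fst \<phi>), mmul (rk1 N) (snd \<psi>) (snd \<phi>))"

definition hmf_iso :: "nat set \<Rightarrow> (nat \<Rightarrow> nat) \<Rightarrow> int \<Rightarrow> mf \<Rightarrow> mf \<Rightarrow> bool" where
  "hmf_iso V wt d M N \<longleftrightarrow>
     (\<exists>\<phi> \<psi>. mf_mor V wt M N \<phi> \<and> mf_mor V wt N M \<psi> \<and>
        htpc V wt d M M (mf_comp N \<psi> \<phi>) (mid, mid) \<and>
        htpc V wt d N N (mf_comp M \<phi> \<psi>) (mid, mid))"

definition zero_mf :: mf where
  "zero_mf = \<lparr>rk0 = 0, dg0 = (\<lambda>_. 0), rk1 = 0, dg1 = (\<lambda>_. 0), mf_f = (\<lambda>_ _. 0), mf_g = (\<lambda>_ _. 0)\<rparr>"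

end

theory Submission
  imports Defs
begin

text \<open>If a matrix factorization \<open>M\<close> is nonzero, its potential \<open>w\<close> is homogeneous of degree
  \<open>deg X\<^sub>n\<^sub>+\<^sub>1\<close>, so \<open>\<partial>w/\<partial>X\<^sub>n\<^sub>+\<^sub>1\<close> is the constant \<open>u\<close> given by the coefficient of
  \<open>X\<^sub>n\<^sub>+\<^sub>1\<close> in \<open>w\<close>. Evaluating at \<open>(n + 1)\<close>-st roots of unity shows \<open>u \<noteq> 0\<close>; this is
  where \<open>k > n\<close> is used. Differentiating \<open>gf = fg = w\<close> then shows that
  \<open>(-u\<^sup>-\<^sup>1 \<partial>f/\<partial>X\<^sub>n\<^sub>+\<^sub>1, -u\<^sup>-\<^sup>1 \<partial>g/\<partial>X\<^sub>n\<^sub>+\<^sub>1)\<close> is a null-homotopy of \<open>-id\<close>, so \<open>M \<cong> 0\<close>.\<close>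

abbreviation lookup where "lookup \<equiv> Poly_Mapping.lookup"
abbreviation keys where "keys \<equiv> Poly_Mapping.keys"
abbreviation single where "single \<equiv> Poly_Mapping.single"

section \<open>Polynomial calculus\<close>

lemma mpoly_eq_sum_monomials: "(p::mpoly) = (\<Sum>m\<in>keys p. single m (lookup p m))"
proof (rule poly_mapping_eqI)
  show "lookup p m = lookup (\<Sum>a\<in>keys p. single a (lookup p a)) m" for m
    by (cases "m \<in> keys p") (auto simp: lookup_sum lookup_single when_def in_keys_iff)
qed

lemma times_mpoly_eq_sum_monomials:
  "(p::mpoly) * q = (\<Sum>a\<in>keys p. \<Sum>b\<in>keys q. single (a + b) (lookup p a * lookup q b))"
proof -
  have "p * q = (\<Sum>a\<in>keys p. single a (lookup p a)) * (\<Sum>b\<in>keys q. single b (lookup q b))"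
    using mpoly_eq_sum_monomials[of p] mpoly_eq_sum_monomials[of q] by simp
  then show ?thesis by (simp add: sum_product mult_single)
qed

definition mpoly_extend :: "((nat \<Rightarrow>\<^sub>0 nat) \<Rightarrow> complex \<Rightarrow> 'b::ab_group_add) \<Rightarrow> mpoly \<Rightarrow> 'b" where
  "mpoly_extend h p = (\<Sum>m\<in>keys p. h m (lookup p m))"

lemma mpoly_extend_superset:
  assumes "\<And>m. h m 0 = 0" "finite S" "keys p \<subseteq> S"
  shows "mpoly_extend h p = (\<Sum>m\<in>S. h m (lookup p m))"
  unfolding mpoly_extend_def using assms by (intro sum.mono_neutral_left) (auto simp: in_keys_iff)

lemma additive_mpoly_extend:
  assumes "\<And>m. additive (h m)"
  shows "additive (mpoly_extend h)"
proof
  fix p q :: mpoly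
  let ?S = "keys p \<union> keys q"
  have h0: "h m 0 = 0" for m by (rule additive.zero[OF assms])
  have "keys (p + q) \<subseteq> ?S" by (rule keys_add)
  then show "mpoly_extend h (p + q) = mpoly_extend h p + mpoly_extend h q"
    by (simp add: mpoly_extend_superset[where h=h, OF h0, of ?S] lookup_add additive.add[OF assms]
        sum.distrib)
qed

lemma mpoly_extend_single:
  assumes "h m 0 = 0"
  shows "mpoly_extend h (single m a) = h m a"
  using assms by (simp add: mpoly_extend_def)

lemma mpoly_extend_times:
  assumes "\<And>m. additive (h m)"
  shows "mpoly_extend h (p * q) = (\<Sum>a\<in>keys p. \<Sum>b\<in>keys q. h (a + b) (lookup p a * lookup q b))"
proof -
  interpret additive "mpoly_extend h" by (rule additive_mpoly_extend) fact
  show ?thesis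
    by (subst times_mpoly_eq_sum_monomials) (simp add: sum mpoly_extend_single additive.zero[OF assms])
qed

definition eval_monom :: "(nat \<Rightarrow> complex) \<Rightarrow> (nat \<Rightarrow>\<^sub>0 nat) \<Rightarrow> complex" where
  "eval_monom x m = (\<Prod>v\<in>keys m. x v ^ lookup m v)"

definition eval_mpoly :: "(nat \<Rightarrow> complex) \<Rightarrow> mpoly \<Rightarrow> complex" where
  "eval_mpoly x = mpoly_extend (\<lambda>m a. a * eval_monom x m)"

lemma eval_monom_superset: "finite S \<Longrightarrow> keys m \<subseteq> S \<Longrightarrow> eval_monom x m = (\<Prod>v\<in>S. x v ^ lookup m v)"
  unfolding eval_monom_def by (rule prod.mono_neutral_left) (auto simp: in_keys_iff)

lemma eval_monom_add: "eval_monom x (a + b) = eval_monom x a * eval_monom x b"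
proof -
  let ?S = "keys a \<union> keys b"
  have "keys (a + b) \<subseteq> ?S" by (rule keys_add)
  then show ?thesis
    by (simp add: eval_monom_superset[of ?S] lookup_add power_add prod.distrib)
qed

lemma additive_eval_mpoly: "additive (eval_mpoly x)"
  unfolding eval_mpoly_def by (intro additive_mpoly_extend) (simp add: additive_def distrib_right)

interpretation eval_mpoly: additive "eval_mpoly x" for x
  by (rule additive_eval_mpoly)

lemma eval_mpoly_single: "eval_mpoly x (single m a) = a * eval_monom x m"
  by (simp add: eval_mpoly_def mpoly_extend_single)

lemma eval_mpoly_times: "eval_mpoly x (p * q) = eval_mpoly x p * eval_mpoly x q"
  unfolding eval_mpoly_def
  by (subst mpoly_extend_times) (simp_all add: additive_def distrib_right eval_monom_add
      mpoly_extend_def sum_product mult_ac)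

lemma eval_mpoly_const: "eval_mpoly x (const a) = a"
  by (simp add: const_def eval_mpoly_single eval_monom_def)

lemma eval_mpoly_one: "eval_mpoly x 1 = 1"
  using eval_mpoly_const[of x 1] by (simp add: const_def)

lemma eval_mpoly_Var: "eval_mpoly x (Var i) = x i"
  by (simp add: Var_def eval_mpoly_single eval_monom_def)

lemma eval_mpoly_prod: "eval_mpoly x (prod f A) = (\<Prod>a\<in>A. eval_mpoly x (f a))"
  by (induction A rule: infinite_finite_induct) (auto simp: eval_mpoly_times eval_mpoly_one)

lemma eval_mpoly_power: "eval_mpoly x (p ^ n) = eval_mpoly x p ^ n"
  by (induction n) (auto simp: eval_mpoly_times eval_mpoly_one)

lemma eval_mpoly_subst: "eval_mpoly x (subst \<sigma> p) = eval_mpoly (\<lambda>v. eval_mpoly x (\<sigma> v)) p"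
proof -
  have "eval_mpoly x (subst \<sigma> p)
      = (\<Sum>m\<in>keys p. lookup p m * (\<Prod>v\<in>keys m. eval_mpoly x (\<sigma> v) ^ lookup m v))"
    by (simp add: subst_def eval_mpoly.sum eval_mpoly_times eval_mpoly_const eval_mpoly_prod
        eval_mpoly_power)
  then show ?thesis by (simp add: eval_mpoly_def mpoly_extend_def eval_monom_def)
qed

lemma eval_mpoly_eq_0:
  assumes "\<And>m. m \<in> keys p \<Longrightarrow> \<exists>v\<in>keys m. x v = 0"
  shows "eval_mpoly x p = 0"
  unfolding eval_mpoly_def mpoly_extend_def
proof (intro sum.neutral ballI)
  fix m assume "m \<in> keys p"
  then obtain v where "v \<in> keys m" "x v = 0" using assms by blast
  then show "lookup p m * eval_monom x m = 0"
    unfolding eval_monom_def by (auto simp: in_keys_iff intro!: prod_zero bexI[of _ v])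
qed

definition pdiff :: "nat \<Rightarrow> mpoly \<Rightarrow> mpoly" where
  "pdiff i = mpoly_extend (\<lambda>m a. single (m - single i 1) (of_nat (lookup m i) * a))"

lemma additive_pdiff: "additive (pdiff i)"
  unfolding pdiff_def by (intro additive_mpoly_extend) (simp add: additive_def distrib_left single_add)

interpretation pdiff: additive "pdiff i" for i
  by (rule additive_pdiff)

lemma pdiff_single: "pdiff i (single m a) = single (m - single i 1) (of_nat (lookup m i) * a)"
  by (simp add: pdiff_def mpoly_extend_single)

lemma minus_single_add_commute:
  "0 < lookup a i \<Longrightarrow> a - single i 1 + b = a + b - (single i 1 :: nat \<Rightarrow>\<^sub>0 nat)"
  by (rule poly_mapping_eqI) (auto simp: lookup_add lookup_minus lookup_single when_def)

lemma minus_single_one_add_cancel: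
  "0 < lookup m i \<Longrightarrow> m - single i 1 + single i 1 = (m :: nat \<Rightarrow>\<^sub>0 nat)"
  by (rule poly_mapping_eqI) (auto simp: lookup_add lookup_minus lookup_single when_def)

lemma pdiff_single_times_single:
  "pdiff i (single (a + b) (x * y)) = pdiff i (single a x) * single b y + single a x * pdiff i (single b y)"
proof -
  let ?e = "single i 1 :: nat \<Rightarrow>\<^sub>0 nat"
  have shift: "single (c - ?e + d) (of_nat (lookup c i) * z) = single (c + d - ?e) (of_nat (lookup c i) * z)"
    for c d and z :: complex
    by (cases "lookup c i = 0") (simp, metis minus_single_add_commute neq0_conv)
  have left: "pdiff i (single a x) * single b y = single (a + b - ?e) (of_nat (lookup a i) * (x * y))"
  proof -
    have "pdiff i (single a x) * single b y = single (a - ?e + b) (of_nat (lookup a i) * (x * y))"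
      by (simp only: pdiff_single mult_single) (simp add: mult_ac)
    then show ?thesis by (simp only: shift)
  qed
  have right: "single a x * pdiff i (single b y) = single (a + b - ?e) (of_nat (lookup b i) * (x * y))"
  proof -
    have "single a x * pdiff i (single b y) = single (b - ?e + a) (of_nat (lookup b i) * (x * y))"
      by (simp only: pdiff_single mult_single add.commute[of a]) (simp add: mult_ac)
    then show ?thesis by (simp only: shift add.commute[of b a])
  qed
  show ?thesis
    unfolding left right by (simp add: pdiff_single lookup_add single_add[symmetric] distrib_right)
qed

lemma pdiff_times: "pdiff i (p * q) = pdiff i p * q + p * pdiff i q"
proof -
  have "pdiff i (p * q) = (\<Sum>a\<in>keys p. \<Sum>b\<in>keys q. pdiff i (single a (lookup p a)) * single b (lookup q b))
                       + (\<Sum>a\<in>keys p. \<Sum>b\<in>keys q. single a (lookup p a) * pdiff i (single b (lookup q b)))"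
    by (subst times_mpoly_eq_sum_monomials)
      (simp add: pdiff.sum pdiff_single_times_single sum.distrib)
  also have "\<dots> = pdiff i (\<Sum>a\<in>keys p. single a (lookup p a)) * (\<Sum>b\<in>keys q. single b (lookup q b))
                 + (\<Sum>a\<in>keys p. single a (lookup p a)) * pdiff i (\<Sum>b\<in>keys q. single b (lookup q b))"
    by (simp add: pdiff.sum sum_product)
  finally show ?thesis
    using mpoly_eq_sum_monomials[of p] mpoly_eq_sum_monomials[of q] by simp
qed

lemma keys_pdiff: "keys (pdiff i p) \<subseteq> {m - single i 1 | m. m \<in> keys p \<and> 0 < lookup m i}"
proof -
  have "keys (pdiff i p) \<subseteq> (\<Union>m\<in>keys p. keys (single (m - single i 1) (of_nat (lookup m i) * lookup p m)))"
    unfolding pdiff_def mpoly_extend_def by (rule keys_sum)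
  also have "\<dots> \<subseteq> {m - single i 1 | m. m \<in> keys p \<and> 0 < lookup m i}"
    by (auto split: if_splits)
  finally show ?thesis .
qed

section \<open>Weighted homogeneity\<close>

lemma mdeg_superset:
  "finite S \<Longrightarrow> keys m \<subseteq> S \<Longrightarrow> mdeg wt m = int (\<Sum>v\<in>S. lookup m v * wt v)"
  unfolding mdeg_def by (subst sum.mono_neutral_left[of S]) (auto simp: in_keys_iff)

lemma mdeg_add: "mdeg wt (a + b) = mdeg wt a + mdeg wt b"
proof -
  let ?S = "keys a \<union> keys b"
  have "keys (a + b) \<subseteq> ?S" by (rule keys_add)
  then show ?thesis
    by (simp add: mdeg_superset[of ?S] lookup_add distrib_right sum.distrib)
qed

lemma mdeg_zero [simp]: "mdeg wt 0 = 0"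
  by (simp add: mdeg_def)

lemma mdeg_single_one: "mdeg wt (single i 1) = int (wt i)"
  by (simp add: mdeg_def)

lemma weight_le_mdeg: "v \<in> keys m \<Longrightarrow> int (wt v) \<le> mdeg wt m"
proof -
  assume v: "v \<in> keys m"
  then have "wt v \<le> lookup m v * wt v" by (simp add: in_keys_iff)
  also have "\<dots> \<le> (\<Sum>u\<in>keys m. lookup m u * wt u)"
    using v by (intro member_le_sum) auto
  finally show ?thesis by (simp only: mdeg_def of_nat_le_iff)
qed

lemma mdeg_minus_single_one:
  assumes "0 < lookup m i"
  shows "mdeg wt (m - single i 1) = mdeg wt m - int (wt i)"
proof -
  have "mdeg wt m = mdeg wt (m - single i 1) + int (wt i)"
    by (metis mdeg_add mdeg_single_one minus_single_one_add_cancel[OF assms])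
  then show ?thesis by simp
qed

lemma mdeg_eq_0_iff:
  assumes "\<And>v. 0 < wt v"
  shows "mdeg wt m = 0 \<longleftrightarrow> m = 0"
proof
  assume "mdeg wt m = 0"
  then have "keys m = {}"
    using weight_le_mdeg[of _ m wt] assms by (metis all_not_in_conv not_le of_nat_0_less_iff)
  then show "m = 0" by simp
qed simp

lemma eq_single_one_if_mdeg:
  assumes "\<And>v. 0 < wt v" "0 < lookup m i" "mdeg wt m = int (wt i)"
  shows "m = single i 1"
proof -
  have "mdeg wt (m - single i 1) = 0"
    using mdeg_minus_single_one[OF assms(2)] assms(3) by simp
  then have "m - single i 1 = 0" by (simp add: mdeg_eq_0_iff assms(1))
  then show ?thesis
    using minus_single_one_add_cancel[OF assms(2)] by simp
qed

lemma homog_zero [simp]: "homog wt e 0"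
  by (simp add: homog_def)

lemma homog_add: "homog wt e p \<Longrightarrow> homog wt e q \<Longrightarrow> homog wt e (p + q)"
  using keys_add[of p q] unfolding homog_def by blast

lemma homog_sum: "(\<And>a. a \<in> A \<Longrightarrow> homog wt e (f a)) \<Longrightarrow> homog wt e (sum f A)"
  by (induction A rule: infinite_finite_induct) (auto intro: homog_add)

lemma homog_times: "homog wt a p \<Longrightarrow> homog wt b q \<Longrightarrow> a + b = e \<Longrightarrow> homog wt e (p * q)"
  using keys_mult[of p q] unfolding homog_def by (force simp: mdeg_add)

lemma homog_const: "homog wt 0 (const a)"
  by (simp add: homog_def const_def)

lemma homog_pdiff:
  assumes "homog wt e p"
  shows "homog wt (e - int (wt i)) (pdiff i p)"
  unfolding homog_def
proof
  fix m' assume "m' \<in> keys (pdiff i p)"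
  then obtain m where "m' = m - single i 1" "m \<in> keys p" "0 < lookup m i"
    using keys_pdiff[of i p] by blast
  then show "mdeg wt m' = e - int (wt i)"
    using assms mdeg_minus_single_one[of m i wt] by (simp add: homog_def)
qed

lemma in_ring_zero [simp]: "in_ring V 0"
  by (simp add: in_ring_def)

lemma in_ring_add: "in_ring V p \<Longrightarrow> in_ring V q \<Longrightarrow> in_ring V (p + q)"
  using keys_add[of p q] unfolding in_ring_def by blast

lemma in_ring_sum: "(\<And>a. a \<in> A \<Longrightarrow> in_ring V (f a)) \<Longrightarrow> in_ring V (sum f A)"
  by (induction A rule: infinite_finite_induct) (auto intro: in_ring_add)

lemma in_ring_times:
  assumes "in_ring V p" "in_ring V q"
  shows "in_ring V (p * q)"
  unfolding in_ring_def
proof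
  fix m assume "m \<in> keys (p * q)"
  then obtain a b where "m = a + b" "a \<in> keys p" "b \<in> keys q"
    using keys_mult[of p q] by blast
  then show "keys m \<subseteq> V"
    using assms keys_add[of a b] unfolding in_ring_def by blast
qed

lemma in_ring_const: "in_ring V (const a)"
  by (simp add: in_ring_def const_def)

lemma in_ring_pdiff: "in_ring V p \<Longrightarrow> in_ring V (pdiff i p)"
proof -
  have "keys (m - single i 1) \<subseteq> keys m" for m :: "nat \<Rightarrow>\<^sub>0 nat"
    by (auto simp: in_keys_iff lookup_minus)
  then show "in_ring V p \<Longrightarrow> in_ring V (pdiff i p)"
    using keys_pdiff[of i p] unfolding in_ring_def by blast
qed

text \<open>A derivative lowers the degree by the weight of the variable, so if that weight equals the
  degree only the linear monomial survives.\<close>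
lemma pdiff_homog_eq_const:
  assumes pos: "\<And>v. 0 < wt v" and hom: "homog wt (int (wt i)) w"
  shows "pdiff i w = const (lookup w (single i 1))"
proof -
  have monomial_term: "single (m - single i 1) (of_nat (lookup m i) * lookup w m)
      = (if m = single i 1 then single 0 (lookup w m) else 0)" if "m \<in> keys w" for m
  proof (cases "lookup m i = 0")
    case False
    moreover have "mdeg wt m = int (wt i)" using hom that unfolding homog_def by blast
    ultimately have "m = single i 1" using eq_single_one_if_mdeg[OF pos] by simp
    then show ?thesis by simp
  qed auto
  have "pdiff i w = (\<Sum>m\<in>keys w. if m = single i 1 then single 0 (lookup w m) else 0)"
    unfolding pdiff_def mpoly_extend_def by (rule sum.cong[OF refl monomial_term])
  also have "\<dots> = const (lookup w (single i 1))"
    by (auto simp: const_def in_keys_iff)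
  finally show ?thesis .
qed

section \<open>Elementary symmetric functions of roots of unity\<close>

lemma bij_betw_image_card_subsets:
  assumes "bij_betw f A B"
  shows "bij_betw ((`) f) {T. T \<subseteq> A \<and> card T = i} {U. U \<subseteq> B \<and> card U = i}"
proof -
  have inj: "inj_on f A" using assms by (rule bij_betw_imp_inj_on)
  have pow: "(`) f ` Pow A = Pow B" using bij_betw_image_Pow[OF assms] by (rule bij_betw_imp_surj_on)
  have card: "card (f ` T) = card T" if "T \<subseteq> A" for T
    using inj_on_subset[OF inj that] by (rule card_image)
  show ?thesis
    unfolding bij_betw_def
  proof
    show "inj_on ((`) f) {T. T \<subseteq> A \<and> card T = i}"
      using inj_on_image_Pow[OF inj] by (rule inj_on_subset) auto
    show "(`) f ` {T. T \<subseteq> A \<and> card T = i} = {U. U \<subseteq> B \<and> card U = i}"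
      using pow card by (auto simp: image_iff) (metis Pow_iff imageE)
  qed
qed

lemma sum_prod_card_subsets_bij:
  fixes f :: "'a \<Rightarrow> 'b::comm_semiring_1"
  assumes "bij_betw f A B"
  shows "(\<Sum>T | T \<subseteq> A \<and> card T = i. \<Prod>j\<in>T. f j) = (\<Sum>U | U \<subseteq> B \<and> card U = i. \<Prod>U)"
proof -
  have "(\<Sum>U | U \<subseteq> B \<and> card U = i. \<Prod>U) = (\<Sum>T | T \<subseteq> A \<and> card T = i. \<Prod>(f ` T))"
    by (rule sum.reindex_bij_betw[symmetric, OF bij_betw_image_card_subsets[OF assms]])
  also have "\<dots> = (\<Sum>T | T \<subseteq> A \<and> card T = i. \<Prod>j\<in>T. f j)"
    using bij_betw_imp_inj_on[OF assms] by (intro sum.cong refl) (auto simp: prod.reindex inj_on_subset)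
  finally show ?thesis ..
qed

text \<open>Multiplication by a primitive root permutes the roots of unity, so the sum is multiplied by
  \<open>\<zeta>\<^sup>i \<noteq> 1\<close>.\<close>
lemma sum_prod_card_subsets_roots_unity:
  assumes "0 < i" "i < N"
  shows "(\<Sum>U | U \<subseteq> {z::complex. z ^ N = 1} \<and> card U = i. \<Prod>U) = 0"
proof -
  let ?R = "{z::complex. z ^ N = 1}"
  let ?S = "\<Sum>U | U \<subseteq> ?R \<and> card U = i. \<Prod>U"
  define \<zeta> where "\<zeta> = cis (2 * pi / N)"
  have roots: "bij_betw (\<lambda>j. cis (2 * pi * real j / real N)) {..<N} ?R"
    using assms by (intro bij_betw_roots_unity) simp
  have pow: "\<zeta> ^ j = cis (2 * pi * real j / real N)" for j
    by (simp add: \<zeta>_def DeMoivre mult_ac)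
  have "\<zeta> ^ i \<noteq> \<zeta> ^ 0"
    unfolding pow using inj_on_contraD[OF bij_betw_imp_inj_on[OF roots], of i 0] assms by simp
  then have \<zeta>_i: "\<zeta> ^ i \<noteq> 1" by simp
  have "\<zeta> ^ N = cis (2 * pi)"
    using pow[of N] assms by simp
  also have "\<dots> = 1" by (simp add: complex_eq_iff)
  finally have unit: "\<zeta> ^ N = 1" .
  have "\<zeta> \<noteq> 0" by (simp add: \<zeta>_def)
  with unit have rotate: "bij_betw ((*) \<zeta>) ?R ?R"
    by (intro bij_betw_byWitness[where f' = "(*) (inverse \<zeta>)"])
      (auto simp: power_mult_distrib power_inverse)
  have "?S = (\<Sum>U | U \<subseteq> ?R \<and> card U = i. \<Prod>z\<in>U. \<zeta> * z)"
    using sum_prod_card_subsets_bij[OF rotate] by simp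
  also have "\<dots> = (\<Sum>U | U \<subseteq> ?R \<and> card U = i. \<zeta> ^ i * \<Prod>U)"
    by (intro sum.cong refl) (simp add: prod.distrib)
  also have "\<dots> = \<zeta> ^ i * ?S"
    by (simp add: sum_distrib_left)
  finally have "(1 - \<zeta> ^ i) * ?S = 0"
    by (simp add: algebra_simps)
  with \<zeta>_i show ?thesis by simp
qed

definition unity_point :: "nat \<Rightarrow> nat \<Rightarrow> complex" where
  "unity_point N j = (if j < N then cis (2 * pi * real j / real N) else 0)"

lemma eval_elem_sym: "eval_mpoly x (elem_sym A i) = (\<Sum>T | T \<subseteq> A \<and> card T = i. \<Prod>j\<in>T. x j)"
  by (simp add: elem_sym_def eval_mpoly.sum eval_mpoly_prod eval_mpoly_Var)

lemma eval_power_sum: "eval_mpoly x (power_sum A m) = (\<Sum>j\<in>A. x j ^ m)"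
  by (simp add: power_sum_def eval_mpoly.sum eval_mpoly_power eval_mpoly_Var)

lemma eval_elem_sym_unity_point:
  assumes "finite A" "{..<N} \<subseteq> A" "0 < i" "i < N"
  shows "eval_mpoly (unity_point N) (elem_sym A i) = 0"
proof -
  have "eval_mpoly (unity_point N) (elem_sym A i)
      = (\<Sum>T | T \<subseteq> {..<N} \<and> card T = i. \<Prod>j\<in>T. unity_point N j)"
    unfolding eval_elem_sym
  proof (rule sum.mono_neutral_right; (intro ballI)?)
    fix T assume T: "T \<in> {T. T \<subseteq> A \<and> card T = i} - {T. T \<subseteq> {..<N} \<and> card T = i}"
    then obtain j where "j \<in> T" "\<not> j < N" by blast
    moreover have "finite T" using T assms(1) finite_subset by blast
    ultimately show "(\<Prod>j\<in>T. unity_point N j) = 0"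
      by (intro prod_zero) (auto simp: unity_point_def)
  next
    show "finite {T. T \<subseteq> A \<and> card T = i}"
      by (rule finite_subset[of _ "Pow A"]) (use assms(1) in auto)
  qed (use assms(2) in auto)
  also have "\<dots> = (\<Sum>T | T \<subseteq> {..<N} \<and> card T = i. \<Prod>j\<in>T. cis (2 * pi * real j / real N))"
    by (intro sum.cong refl prod.cong) (auto simp: unity_point_def)
  also have "\<dots> = (\<Sum>U | U \<subseteq> {z. z ^ N = 1} \<and> card U = i. \<Prod>U)"
    using assms(3,4) by (intro sum_prod_card_subsets_bij bij_betw_roots_unity) simp
  also have "\<dots> = 0"
    using assms(3,4) by (rule sum_prod_card_subsets_roots_unity)
  finally show ?thesis .
qed

lemma eval_elem_sym_unity_point_disjoint:
  assumes "A \<inter> {..<N} = {}" "0 < i"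
  shows "eval_mpoly (unity_point N) (elem_sym A i) = 0"
  unfolding eval_elem_sym
proof (intro sum.neutral ballI)
  fix T assume T: "T \<in> {T. T \<subseteq> A \<and> card T = i}"
  then have "0 < card T" using assms(2) by simp
  then have "finite T" "T \<noteq> {}" by (simp_all add: card_gt_0_iff)
  moreover have "\<forall>j\<in>T. unity_point N j = 0"
    using T assms(1) by (auto simp: unity_point_def)
  ultimately show "(\<Prod>j\<in>T. unity_point N j) = 0"
    by (metis all_not_in_conv prod_zero)
qed

lemma eval_power_sum_unity_point:
  assumes "finite A" "{..<N} \<subseteq> A" "0 < N"
  shows "eval_mpoly (unity_point N) (power_sum A N) = of_nat N"
proof -
  have root: "cis (2 * pi * real j / real N) ^ N = 1" if "j < N" for j
  proof -
    have "cis (2 * pi * real j / real N) \<in> {z. z ^ N = 1}"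
      using bij_betw_imp_surj_on[OF bij_betw_roots_unity[OF assms(3)]] that by blast
    then show ?thesis by simp
  qed
  have "eval_mpoly (unity_point N) (power_sum A N) = (\<Sum>j<N. unity_point N j ^ N)"
    unfolding eval_power_sum
    by (rule sum.mono_neutral_right) (use assms in \<open>auto simp: unity_point_def\<close>)
  also have "\<dots> = of_nat N"
    by (simp add: unity_point_def root)
  finally show ?thesis .
qed

lemma eval_power_sum_unity_point_disjoint:
  assumes "A \<inter> {..<N} = {}" "0 < N"
  shows "eval_mpoly (unity_point N) (power_sum A N) = 0"
  using assms by (auto simp: eval_power_sum unity_point_def intro!: sum.neutral)

section \<open>Matrix factorizations with a unit partial derivative\<close>

lemma hmap_mmul:
  assumes A: "hmap V wt r1 d1 r2 d2 e A" and B: "hmap V wt r0 d0 r1 d1 e' B"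
  shows "hmap V wt r0 d0 r2 d2 (e' + e) (mmul r1 A B)"
  unfolding hmap_def mmul_def
proof (intro allI impI conjI in_ring_sum homog_sum)
  fix i j l assume "i < r2" "j < r0" "l \<in> {..<r1}"
  then have "in_ring V (A i l)" "homog wt (d1 l + e - d2 i) (A i l)"
    and "in_ring V (B l j)" "homog wt (d0 j + e' - d1 l) (B l j)"
    using A B unfolding hmap_def by auto
  then show "in_ring V (A i l * B l j)" "homog wt (d0 j + (e' + e) - d2 i) (A i l * B l j)"
    by (auto intro: in_ring_times homog_times)
qed

lemma is_mf_homog:
  assumes mf: "is_mf V wt d w M" and nonzero: "0 < rk0 M \<or> 0 < rk1 M"
  shows "homog wt d w"
proof -
  let ?f = "mf_f M" and ?g = "mf_g M"
  have f: "hmap V wt (rk0 M) (dg0 M) (rk1 M) (dg1 M) d ?f"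
    and g: "hmap V wt (rk1 M) (dg1 M) (rk0 M) (dg0 M) 0 ?g"
    using mf unfolding is_mf_def by auto
  show ?thesis
  proof (cases "0 < rk0 M")
    case True
    then have "w = mmul (rk1 M) ?g ?f 0 0"
      using mf by (simp add: is_mf_def meq_def mscal_def)
    moreover have "homog wt (dg0 M 0 + (d + 0) - dg0 M 0) (mmul (rk1 M) ?g ?f 0 0)"
      using hmap_mmul[OF g f] True unfolding hmap_def by blast
    ultimately show ?thesis by simp
  next
    case False
    with nonzero have "0 < rk1 M" by simp
    then have "w = mmul (rk0 M) ?f ?g 0 0"
      using mf by (simp add: is_mf_def meq_def mscal_def)
    moreover have "homog wt (dg1 M 0 + (0 + d) - dg1 M 0) (mmul (rk0 M) ?f ?g 0 0)"
      using hmap_mmul[OF f g] \<open>0 < rk1 M\<close> unfolding hmap_def by blast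
    ultimately show ?thesis by simp
  qed
qed

lemma hmap_scaled_pdiff:
  assumes "hmap V wt rs ds rt dt e A"
  shows "hmap V wt rs ds rt dt (e - int (wt i)) (\<lambda>a b. const c * pdiff i (A a b))"
  unfolding hmap_def
proof (intro allI impI conjI)
  fix a b assume "a < rt" "b < rs"
  then have "in_ring V (A a b)" "homog wt (ds b + e - dt a) (A a b)"
    using assms unfolding hmap_def by auto
  then show "in_ring V (const c * pdiff i (A a b))"
    and "homog wt (ds b + (e - int (wt i)) - dt a) (const c * pdiff i (A a b))"
    by (simp_all add: in_ring_times in_ring_const in_ring_pdiff
        homog_times[OF homog_const homog_pdiff])
qed

lemma mmul_pdiff_leibniz:
  "madd (mmul r A (\<lambda>a b. const c * pdiff i (B a b))) (mmul r (\<lambda>a b. const c * pdiff i (A a b)) B)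
     = (\<lambda>a b. const c * pdiff i (mmul r A B a b))"
  by (simp add: madd_def mmul_def pdiff.sum pdiff_times sum.distrib sum_distrib_left algebra_simps)

lemma null_htpc_neg_id_if_pdiff_unit:
  assumes mf: "is_mf V wt d w M" and deg: "int (wt i) = d"
    and unit: "pdiff i w = const u" "u \<noteq> 0"
  shows "null_htpc V wt d M M (\<lambda>a b. - mid a b, \<lambda>a b. - mid a b)"
proof -
  let ?f = "mf_f M" and ?g = "mf_g M" and ?c = "- 1 / u"
  define D0 where "D0 = (\<lambda>a b. const ?c * pdiff i (?f a b))"
  define D1 where "D1 = (\<lambda>a b. const ?c * pdiff i (?g a b))"
  have "hmap V wt (rk0 M) (dg0 M) (rk1 M) (dg1 M) (d - int (wt i)) D0"
    unfolding D0_def by (rule hmap_scaled_pdiff) (use mf in \<open>simp add: is_mf_def\<close>)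
  moreover have "hmap V wt (rk1 M) (dg1 M) (rk0 M) (dg0 M) (0 - int (wt i)) D1"
    unfolding D1_def by (rule hmap_scaled_pdiff) (use mf in \<open>simp add: is_mf_def\<close>)
  ultimately have hD: "hmap V wt (rk0 M) (dg0 M) (rk1 M) (dg1 M) 0 D0"
    "hmap V wt (rk1 M) (dg1 M) (rk0 M) (dg0 M) (- d) D1"
    using deg by simp_all
  have neg_id: "const ?c * pdiff i (mscal w a b) = - mid a b" for a b
  proof -
    have "pdiff i (mscal w a b) = (if a = b then const u else 0)"
      by (simp add: mscal_def unit(1) pdiff.zero)
    moreover have "const ?c * const u = - 1"
      using unit(2) by (simp add: const_def mult_single single_uminus)
    ultimately show ?thesis by (simp add: mid_def mscal_def)
  qed
  have "meq (rk0 M) (rk0 M) (madd (mmul (rk1 M) ?g D0) (mmul (rk1 M) D1 ?f)) (\<lambda>a b. - mid a b)"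
    and "meq (rk1 M) (rk1 M) (madd (mmul (rk0 M) ?f D1) (mmul (rk0 M) D0 ?g)) (\<lambda>a b. - mid a b)"
    using mf unfolding D0_def D1_def mmul_pdiff_leibniz
    by (auto simp: is_mf_def meq_def neg_id[symmetric])
  with hD show ?thesis
    unfolding null_htpc_def by auto
qed

lemma null_htpc_neg_id_if_rank_zero:
  "rk0 M = 0 \<Longrightarrow> rk1 M = 0 \<Longrightarrow> null_htpc V wt d M M (\<lambda>a b. - mid a b, \<lambda>a b. - mid a b)"
  unfolding null_htpc_def hmap_def meq_def by auto

lemma hmf_iso_zero_if_null_htpc_neg_id:
  assumes "null_htpc V wt d M M (\<lambda>a b. - mid a b, \<lambda>a b. - mid a b)"
  shows "hmf_iso V wt d M zero_mf"
proof -
  let ?Z = "(\<lambda>_ _. 0 :: mpoly, \<lambda>_ _. 0 :: mpoly)"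
  have "mf_mor V wt M zero_mf ?Z" "mf_mor V wt zero_mf M ?Z"
    by (simp_all add: mf_mor_def hmap_def meq_def zero_mf_def)
  moreover have "htpc V wt d M M (mf_comp zero_mf ?Z ?Z) (mid, mid)"
    using assms by (simp add: htpc_def mf_comp_def mmul_def msub_def zero_mf_def)
  moreover have "htpc V wt d zero_mf zero_mf (mf_comp M ?Z ?Z) (mid, mid)"
    by (simp add: htpc_def null_htpc_def hmap_def meq_def zero_mf_def)
  ultimately show ?thesis
    unfolding hmf_iso_def by blast
qed

section \<open>The potential of power sums\<close>

lemma eval_elem_sym_var_unity_point:
  assumes "n < k" "v < n \<or> k \<le> v"
  shows "eval_mpoly (unity_point (n + 1))
           (if v < k then elem_sym {..<k} (v + 1) else elem_sym {k..<2*k} (v - k + 1)) = 0"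
proof (cases "v < n")
  case True
  with assms show ?thesis
    by (simp add: eval_elem_sym_unity_point)
next
  case False
  moreover have "{k..<2*k} \<inter> {..<n + 1} = {}" using assms(1) by auto
  ultimately show ?thesis
    using assms by (simp add: eval_elem_sym_unity_point_disjoint)
qed

lemma eq_single_one_if_mdeg_window:
  fixes n k c :: nat
  defines "wt \<equiv> \<lambda>v. if v < k then c * (v + 1) else c * (v - k + 1)"
  assumes "n < k" "0 < c" and deg: "mdeg wt m = int (wt n)"
    and window: "\<And>v. v \<in> keys m \<Longrightarrow> n \<le> v \<and> v < k"
  shows "m = single n 1"
proof -
  have pos: "0 < wt v" for v using \<open>0 < c\<close> by (simp add: wt_def)
  have "m \<noteq> 0"
    using deg pos[of n] by auto
  then obtain v where v: "v \<in> keys m"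
    using keys_eq_empty by blast
  have "wt v \<le> wt n" using weight_le_mdeg[OF v, of wt] deg by simp
  then have "v = n" using window[OF v] \<open>0 < c\<close> by (simp add: wt_def)
  with v deg show ?thesis
    by (intro eq_single_one_if_mdeg[OF pos]) (simp_all add: in_keys_iff)
qed

text \<open>At the point whose first \<open>n + 1\<close> coordinates are the \<open>(n + 1)\<close>-st roots of unity and whose
  other coordinates vanish, \<open>e\<^sub>1, \<dots>, e\<^sub>n\<close> and all \<open>Y\<close>-variables vanish, so only the monomial
  \<open>X\<^sub>n\<^sub>+\<^sub>1\<close> of \<open>w\<close> can contribute, while \<open>\<Sigma>\<^bold>X\<^sup>n\<^sup>+\<^sup>1 - \<Sigma>\<^bold>Y\<^sup>n\<^sup>+\<^sup>1\<close> takes the value \<open>n + 1\<close>.\<close>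
lemma potential_coeff_Var_nonzero:
  fixes n k c :: nat and w :: mpoly
  defines "wt \<equiv> \<lambda>v. if v < k then c * (v + 1) else c * (v - k + 1)"
    and "\<sigma> \<equiv> \<lambda>v. if v < k then elem_sym {..<k} (v + 1) else elem_sym {k..<2*k} (v - k + 1)"
  assumes "n < k" "0 < c" and hom: "homog wt (int (c * (n + 1))) w"
    and pot: "subst \<sigma> w = power_sum {..<k} (n + 1) - power_sum {k..<2*k} (n + 1)"
  shows "lookup w (single n 1) \<noteq> 0"
proof
  assume coeff: "lookup w (single n 1) = 0"
  let ?x = "unity_point (n + 1)"
  define y where "y = (\<lambda>v. eval_mpoly ?x (\<sigma> v))"
  have "\<exists>v\<in>keys m. y v = 0" if m: "m \<in> keys w" for m
  proof (rule ccontr)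
    assume no_zero: "\<not> ?thesis"
    have "n \<le> v \<and> v < k" if "v \<in> keys m" for v
      using eval_elem_sym_var_unity_point[OF \<open>n < k\<close>, of v] no_zero that
      unfolding y_def \<sigma>_def by force
    moreover have "mdeg wt m = int (wt n)"
      using hom m \<open>n < k\<close> by (simp add: homog_def wt_def)
    ultimately have "m = single n 1"
      using \<open>n < k\<close> \<open>0 < c\<close> unfolding wt_def by (intro eq_single_one_if_mdeg_window) auto
    with m coeff show False by (simp add: in_keys_iff)
  qed
  then have "eval_mpoly y w = 0" by (rule eval_mpoly_eq_0)
  moreover have "eval_mpoly y w = eval_mpoly ?x (subst \<sigma> w)"
    by (simp add: y_def eval_mpoly_subst)
  moreover have "eval_mpoly ?x (power_sum {..<k} (n + 1)) = of_nat (n + 1)"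
    using \<open>n < k\<close> by (intro eval_power_sum_unity_point) auto
  moreover have "eval_mpoly ?x (power_sum {k..<2*k} (n + 1)) = 0"
    using \<open>n < k\<close> by (intro eval_power_sum_unity_point_disjoint) auto
  ultimately have "(of_nat (n + 1) :: complex) = 0"
    by (simp add: pot eval_mpoly.diff)
  then show False by (simp only: of_nat_eq_0_iff)
qed

theorem proposition3p4p5:
  fixes n k c :: nat and w :: mpoly
  assumes "n \<ge> 1" and "k > n" and "c > 0"
    and "in_ring {..<2*k} w"
    and "subst (\<lambda>v. if v < k then elem_sym {..<k} (v + 1) else elem_sym {k..<2*k} (v - k + 1)) w
           = power_sum {..<k} (n + 1) - power_sum {k..<2*k} (n + 1)"
  shows "\<forall>M. is_mf {..<2*k} (\<lambda>v. if v < k then c * (v + 1) else c * (v - k + 1))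
                 (int (c * (n + 1))) w M \<longrightarrow>
             hmf_iso {..<2*k} (\<lambda>v. if v < k then c * (v + 1) else c * (v - k + 1))
                 (int (c * (n + 1))) M zero_mf"
proof (intro allI impI)
  fix M
  let ?wt = "\<lambda>v. if v < k then c * (v + 1) else c * (v - k + 1)" and ?d = "int (c * (n + 1))"
  assume mf: "is_mf {..<2*k} ?wt ?d w M"
  have "null_htpc {..<2*k} ?wt ?d M M (\<lambda>a b. - mid a b, \<lambda>a b. - mid a b)"
  proof (cases "rk0 M = 0 \<and> rk1 M = 0")
    case True
    then show ?thesis by (intro null_htpc_neg_id_if_rank_zero) auto
  next
    case False
    then have hom: "homog ?wt ?d w" using is_mf_homog[OF mf] by auto
    have deg: "int (?wt n) = ?d" using assms(2) by simp
    have "pdiff n w = const (lookup w (single n 1))"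
      using assms(3) hom deg by (intro pdiff_homog_eq_const[where wt = ?wt]) simp_all
    moreover have "lookup w (single n 1) \<noteq> 0"
      using assms(2,3) hom assms(5) by (rule potential_coeff_Var_nonzero)
    ultimately show ?thesis
      using mf deg by (intro null_htpc_neg_id_if_pdiff_unit)
  qed
  then show "hmf_iso {..<2*k} ?wt ?d M zero_mf"
    by (rule hmf_iso_zero_if_null_htpc_neg_id)
qed

end
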